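(* Let $W$ be a $p$-regular, $p$-locally dense graphon on $\Omega$. Then the tensor product $W\otimes W$, defined on $\Omega\times\Omega$ (with the product measure) by $(W\otimes W)((x_1,x_2),(y_1,y_2))=W(x_1,y_1)W(x_2,y_2)$, is a $p^2$-regular, $p^2$-locally dense graphon.
   Context: Let $(\Omega,\mu)$ be an atomless standard probability space. A graphon is a symmetric measurable $W:\Omega\times\Omega\to[0,1]$ (graphons equal a.e. are identified). $W$ is $p$-regular if $\int_\Omega W(x,y)\,dy=p$ for a.e. $x$, and $p$-locally dense if $\iint_{U\times U}W(x,y)\,dx\,dy\ge p\,\mu(U)^2$ for every measurable $U\subseteq\Omega$ (the same definitions apply on $\Omega\times\Omega$ with the product measure). *)

theory Defs
  imports "HOL-Probability.Probability"
begin

definition atomless :: "'a measure \<Rightarrow> bool" where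
  "atomless M \<longleftrightarrow> (\<forall>A\<in>sets M. measure M A > 0 \<longrightarrow>
      (\<exists>B\<in>sets M. B \<subseteq> A \<and> 0 < measure M B \<and> measure M B < measure M A))"

definition atomless_standard_prob_space :: "('a::polish_space) measure \<Rightarrow> bool" where
  "atomless_standard_prob_space M \<longleftrightarrow>
     prob_space M \<and> sets M = sets borel \<and> atomless M"

definition graphon :: "'a measure \<Rightarrow> ('a \<Rightarrow> 'a \<Rightarrow> real) \<Rightarrow> bool" where
  "graphon M W \<longleftrightarrow>
     case_prod W \<in> borel_measurable (M \<Otimes>\<^sub>M M) \<and>
     (\<forall>x\<in>space M. \<forall>y\<in>space M. W x y = W y x) \<and>
     (\<forall>x\<in>space M. \<forall>y\<in>space M. 0 \<le> W x y \<and> W x y \<le> 1)"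

definition regular :: "'a measure \<Rightarrow> real \<Rightarrow> ('a \<Rightarrow> 'a \<Rightarrow> real) \<Rightarrow> bool" where
  "regular M p W \<longleftrightarrow> (AE x in M. (\<integral>y. W x y \<partial>M) = p)"

definition locally_dense :: "'a measure \<Rightarrow> real \<Rightarrow> ('a \<Rightarrow> 'a \<Rightarrow> real) \<Rightarrow> bool" where
  "locally_dense M p W \<longleftrightarrow>
     (\<forall>U\<in>sets M. (LINT z:U \<times> U|M \<Otimes>\<^sub>M M. W (fst z) (snd z)) \<ge> p * (measure M U)\<^sup>2)"

definition tensor :: "('a \<Rightarrow> 'a \<Rightarrow> real) \<Rightarrow> ('a \<times> 'a) \<Rightarrow> ('a \<times> 'a) \<Rightarrow> real" where
  "tensor W = (\<lambda>(x1, x2) (y1, y2). W x1 y1 * W x2 y2)"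

end

theory Submission
  imports Defs
begin

text \<open>Let \<open>K = W - p\<close> and \<open>B f g = \<integral>\<integral> K x y f x g y\<close>. Local density says that
  \<open>B 1_U 1_U \<ge> 0\<close> and regularity says that \<open>B f 1 = 0\<close>. Splitting a simple function along a fine
  partition of the atomless space and interpolating its values one cell at a time shows that \<open>B\<close>
  is positive semidefinite on simple functions, so Gram matrices of indicators are positive
  semidefinite. Since \<open>W \<otimes> W - p\<^sup>2 = K \<otimes> K + p (K \<otimes> 1) + p (1 \<otimes> K)\<close>, the form of
  \<open>W \<otimes> W - p\<^sup>2\<close> at a linear combination of indicators of rectangles \<open>A_k \<times> E_k\<close> is a sum of
  Hadamard products of the Gram matrices of the \<open>A_k\<close> and of the \<open>E_k\<close> with each other and with
  rank-one matrices, hence nonnegative by the Schur product theorem. Such combinations are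
  \<open>L\<^sup>1\<close>-dense among indicators of product-measurable sets and the form is \<open>L\<^sup>1\<close>-continuous,
  which gives local density of \<open>W \<otimes> W\<close>; its regularity is Fubini's theorem.\<close>

section \<open>Positive semidefinite matrices and the Schur product theorem\<close>

definition pos_semidef :: "nat \<Rightarrow> (nat \<Rightarrow> nat \<Rightarrow> real) \<Rightarrow> bool" where
  "pos_semidef n X \<longleftrightarrow> (\<forall>c. 0 \<le> (\<Sum>k<n. \<Sum>l<n. c k * c l * X k l))"

lemma double_sum_lessThan_Suc:
  "(\<Sum>k<Suc n. \<Sum>l<Suc n. F k l) =
     (\<Sum>k<n. \<Sum>l<n. F k l) + (\<Sum>k<n. F k n) + (\<Sum>l<n. F n l) + (F n n :: real)"
  by (simp add: sum.distrib)

lemma pos_semidef_last_diag_nonneg: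
  assumes "pos_semidef (Suc n) X"
  shows "0 \<le> X n n"
  using assms[unfolded pos_semidef_def, rule_format, of "\<lambda>k. if k = n then 1 else 0"]
  unfolding double_sum_lessThan_Suc by simp

lemma pos_semidef_SucD:
  assumes "pos_semidef (Suc n) X"
  shows "pos_semidef n X"
  unfolding pos_semidef_def
proof
  fix c
  show "0 \<le> (\<Sum>k<n. \<Sum>l<n. c k * c l * X k l)"
    using assms[unfolded pos_semidef_def, rule_format, of "\<lambda>k. if k = n then 0 else c k"]
    unfolding double_sum_lessThan_Suc by simp
qed

lemma pos_semidef_rescale:
  assumes "pos_semidef n X"
  shows "pos_semidef n (\<lambda>k l. c k * c l * X k l)"
  unfolding pos_semidef_def
proof
  fix d
  show "0 \<le> (\<Sum>k<n. \<Sum>l<n. d k * d l * (c k * c l * X k l))"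
    using assms[unfolded pos_semidef_def, rule_format, of "\<lambda>k. d k * c k"]
    by (simp add: algebra_simps)
qed

text \<open>Schur complement of the last diagonal entry, with the entry enlarged to \<open>d > 0\<close> so that no
  case distinction on \<open>X n n = 0\<close> is needed.\<close>
lemma pos_semidef_schur_complement:
  assumes sym: "\<And>k l. X k l = X l k" and X: "pos_semidef (Suc n) X"
    and d: "0 < d" "X n n \<le> d"
  shows "pos_semidef n (\<lambda>k l. X k l - X k n * X l n / d)"
  unfolding pos_semidef_def
proof
  fix c
  define s where "s = (\<Sum>k<n. c k * X k n)"
  define t where "t = - s / d"
  define c' where "c' = (\<lambda>k. if k = n then t else c k)"
  have "0 \<le> (\<Sum>k<Suc n. \<Sum>l<Suc n. c' k * c' l * X k l)"
    using X unfolding pos_semidef_def by blast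
  also have "\<dots> = (\<Sum>k<n. \<Sum>l<n. c k * c l * X k l) + 2 * t * s + t * t * X n n"
  proof -
    have "(\<Sum>k<n. c' k * c' n * X k n) = t * s" "(\<Sum>l<n. c' n * c' l * X n l) = t * s"
      unfolding c'_def s_def sum_distrib_left using sym by (auto intro!: sum.cong)
    then show ?thesis unfolding double_sum_lessThan_Suc by (simp add: c'_def)
  qed
  also have "\<dots> \<le> (\<Sum>k<n. \<Sum>l<n. c k * c l * X k l) + 2 * t * s + t * t * d"
    using d by (simp add: mult_left_mono)
  also have "\<dots> = (\<Sum>k<n. \<Sum>l<n. c k * c l * X k l) - s * s / d"
    using d by (simp add: t_def field_simps power2_eq_square)
  also have "s * s / d = (\<Sum>k<n. \<Sum>l<n. c k * c l * (X k n * X l n / d))"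
    by (simp add: s_def sum_product sum_divide_distrib algebra_simps)
  finally show "0 \<le> (\<Sum>k<n. \<Sum>l<n. c k * c l * (X k l - X k n * X l n / d))"
    by (simp add: right_diff_distrib sum_subtractf)
qed

lemma sum_mult_schur_complement_split:
  fixes X Y :: "nat \<Rightarrow> nat \<Rightarrow> real" and n :: nat
  assumes symX: "\<And>k l. X k l = X l k" and symY: "\<And>k l. Y k l = Y l k" and "d \<noteq> 0"
  defines "X' \<equiv> \<lambda>k l. X k l - X k n * X l n / d"
    and "x \<equiv> \<lambda>k. if k = n then d else X k n"
  shows "(\<Sum>k<Suc n. \<Sum>l<Suc n. X k l * Y k l) + (d - X n n) * Y n n
    = (\<Sum>k<n. \<Sum>l<n. X' k l * Y k l) + (\<Sum>k<Suc n. \<Sum>l<Suc n. x k * x l * Y k l) / d"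
proof -
  have "(\<Sum>k<n. \<Sum>l<n. x k * x l * Y k l) = (\<Sum>k<n. \<Sum>l<n. X k n * X l n * Y k l)"
    "(\<Sum>k<n. x k * x n * Y k n) = d * (\<Sum>k<n. X k n * Y k n)"
    "(\<Sum>l<n. x n * x l * Y n l) = d * (\<Sum>k<n. X k n * Y k n)"
    "(\<Sum>l<n. X n l * Y n l) = (\<Sum>k<n. X k n * Y k n)"
    unfolding x_def sum_distrib_left using symX symY by (auto intro!: sum.cong)
  moreover have "(\<Sum>k<n. \<Sum>l<n. X' k l * Y k l)
      = (\<Sum>k<n. \<Sum>l<n. X k l * Y k l) - (\<Sum>k<n. \<Sum>l<n. X k n * X l n * Y k l) / d"
    unfolding X'_def by (simp add: sum_subtractf left_diff_distrib sum_divide_distrib)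
  ultimately show ?thesis
    using \<open>d \<noteq> 0\<close> unfolding double_sum_lessThan_Suc by (simp add: x_def field_simps)
qed

text \<open>Induction on \<open>n\<close>: removing the rank-one part \<open>x x\<^sup>T / d\<close> of \<open>X\<close> leaves the Schur
  complement, to which the induction hypothesis applies, while the rank-one part contributes
  \<open>x\<^sup>T Y x / d \<ge> 0\<close>.\<close>
lemma pos_semidef_entrywise_sum_nonneg:
  assumes "\<And>k l. X k l = X l k" "\<And>k l. Y k l = Y l k" "pos_semidef n X" "pos_semidef n Y"
  shows "0 \<le> (\<Sum>k<n. \<Sum>l<n. X k l * Y k l)"
  using assms
proof (induction n arbitrary: X)
  case 0
  then show ?case by simp
next
  case (Suc n)
  note symX = Suc.prems(1) and symY = Suc.prems(2)
  have Xnn: "0 \<le> X n n" and Ynn: "0 \<le> Y n n"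
    using Suc.prems(3,4) by (auto intro: pos_semidef_last_diag_nonneg)
  have approx: "0 \<le> (\<Sum>k<Suc n. \<Sum>l<Suc n. X k l * Y k l) + \<epsilon> * Y n n" if "0 < \<epsilon>" for \<epsilon>
  proof -
    define d where "d = X n n + \<epsilon>"
    have d: "0 < d" "X n n \<le> d" using Xnn that by (auto simp: d_def)
    have "0 \<le> (\<Sum>k<n. \<Sum>l<n. (X k l - X k n * X l n / d) * Y k l)"
    proof (rule Suc.IH)
      show "pos_semidef n (\<lambda>k l. X k l - X k n * X l n / d)"
        using pos_semidef_schur_complement[OF symX Suc.prems(3) d] .
    qed (use symX symY pos_semidef_SucD[OF Suc.prems(4)] in \<open>auto simp: mult.commute\<close>)
    moreover have "0 \<le> (\<Sum>k<Suc n. \<Sum>l<Suc n.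
        (if k = n then d else X k n) * (if l = n then d else X l n) * Y k l)"
      using Suc.prems(4)[unfolded pos_semidef_def, rule_format, of "\<lambda>k. if k = n then d else X k n"] .
    ultimately show ?thesis
      using sum_mult_schur_complement_split[where X = X and Y = Y and n = n and d = d, OF symX symY] d
      by (simp add: d_def)
  qed
  show ?case
  proof (rule field_le_epsilon)
    fix e :: real
    assume "0 < e"
    define \<epsilon> where "\<epsilon> = e / (Y n n + 1)"
    have "0 < \<epsilon>" "\<epsilon> * Y n n \<le> e"
      using \<open>0 < e\<close> Ynn by (auto simp: \<epsilon>_def field_simps)
    then show "0 \<le> (\<Sum>k<Suc n. \<Sum>l<Suc n. X k l * Y k l) + e"
      using approx[of \<epsilon>] by linarith
  qed
qed

theorem pos_semidef_hadamard:
  assumes "\<And>k l. X k l = X l k" "\<And>k l. Y k l = Y l k" "pos_semidef n X" "pos_semidef n Y"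
  shows "pos_semidef n (\<lambda>k l. X k l * Y k l)"
  unfolding pos_semidef_def
proof
  fix c
  have "0 \<le> (\<Sum>k<n. \<Sum>l<n. (c k * c l * X k l) * Y k l)"
    using assms pos_semidef_rescale[OF assms(3)]
    by (intro pos_semidef_entrywise_sum_nonneg) (auto simp: mult.commute)
  then show "0 \<le> (\<Sum>k<n. \<Sum>l<n. c k * c l * (X k l * Y k l))"
    by (simp add: mult.assoc)
qed

section \<open>Measure-theoretic preliminaries\<close>

lemma simple_function_bounded:
  fixes f :: "'a \<Rightarrow> real"
  assumes "simple_function M f"
  obtains C where "\<And>x. x \<in> space M \<Longrightarrow> \<bar>f x\<bar> \<le> C"
proof
  have "finite (abs ` f ` space M)" using assms by (simp add: simple_function_def)
  then show "\<bar>f x\<bar> \<le> Max (abs ` f ` space M)" if "x \<in> space M" for x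
    using that by (auto intro!: Max_ge)
qed

lemma (in finite_measure) integrable_abs_simple_function:
  fixes f :: "'a \<Rightarrow> real"
  assumes "simple_function M f"
  shows "integrable M (\<lambda>x. \<bar>f x\<bar>)"
  using simple_function_compose1[OF assms, of abs] by (auto intro!: integrable_simple_function)

lemma integral_mult_fst_snd:
  fixes f :: "'a \<Rightarrow> real" and g :: "'b \<Rightarrow> real"
  assumes "prob_space M" "prob_space N"
    and [measurable]: "f \<in> borel_measurable M" "g \<in> borel_measurable N"
    and f: "\<And>x. x \<in> space M \<Longrightarrow> \<bar>f x\<bar> \<le> Cf" and g: "\<And>y. y \<in> space N \<Longrightarrow> \<bar>g y\<bar> \<le> Cg"
  shows integrable_mult_fst_snd: "integrable (M \<Otimes>\<^sub>M N) (\<lambda>z. f (fst z) * g (snd z))"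
    and "(\<integral>z. f (fst z) * g (snd z) \<partial>(M \<Otimes>\<^sub>M N)) = integral\<^sup>L M f * integral\<^sup>L N g"
proof -
  interpret pair_prob_space M N
    using assms(1,2) by (simp add: pair_prob_space_def pair_sigma_finite_def prob_space_imp_sigma_finite)
  show int: "integrable (M \<Otimes>\<^sub>M N) (\<lambda>z. f (fst z) * g (snd z))"
  proof (rule P.integrable_const_bound[where B = "Cf * Cg"])
    show "AE z in M \<Otimes>\<^sub>M N. norm (f (fst z) * g (snd z)) \<le> Cf * Cg"
      using f g by (intro AE_I2) (auto simp: space_pair_measure abs_mult intro!: mult_mono
          intro: order_trans[OF abs_ge_zero])
  qed measurable
  show "(\<integral>z. f (fst z) * g (snd z) \<partial>(M \<Otimes>\<^sub>M N)) = integral\<^sup>L M f * integral\<^sup>L N g"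
    using integral_fst'[OF int] by simp
qed

lemma simple_function_partition_refinement:
  fixes g :: "'a \<Rightarrow> real"
  assumes g: "simple_function M g"
    and \<P>: "finite \<P>" "\<P> \<subseteq> sets M" "disjoint \<P>" "\<Union>\<P> = space M"
  obtains I :: "(real \<times> 'a set) set" and C
  where "finite I" "\<And>i. i \<in> I \<Longrightarrow> C i \<in> sets M" "disjoint_family_on C I"
    "\<And>i. i \<in> I \<Longrightarrow> \<exists>P\<in>\<P>. C i \<subseteq> P" "\<And>i. i \<in> I \<Longrightarrow> fst i \<in> g ` space M"
    "\<And>x. x \<in> space M \<Longrightarrow> g x = (\<Sum>i\<in>I. fst i * indicator (C i) x)"
proof -
  define I where "I = g ` space M \<times> \<P>"
  define C where "C = (\<lambda>(v, P). g -` {v} \<inter> P)"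
  have fin: "finite I" using g \<P>(1) by (simp add: I_def simple_function_def)
  have sets: "C i \<in> sets M" if "i \<in> I" for i
  proof -
    obtain x P where i: "i = (g x, P)" "x \<in> space M" "P \<in> \<P>"
      using \<open>i \<in> I\<close> unfolding I_def by blast
    then have "C i = (g -` {g x} \<inter> space M) \<inter> P"
      using \<P>(2) sets.sets_into_space by (auto simp: C_def)
    then show ?thesis using g i \<P>(2) by (auto simp: simple_function_def)
  qed
  have disj: "disjoint_family_on C I"
    unfolding disjoint_family_on_def
  proof (intro ballI impI)
    fix i j assume "i \<in> I" "j \<in> I" "i \<noteq> j"
    then obtain v P v' P' where "i = (v, P)" "j = (v', P')" "P \<in> \<P>" "P' \<in> \<P>" "v \<noteq> v' \<or> P \<noteq> P'"
      by (auto simp: I_def)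
    then show "C i \<inter> C j = {}"
      using \<P>(3) by (auto simp: C_def disjnt_def pairwise_def)
  qed
  have "g x = (\<Sum>i\<in>I. fst i * indicator (C i) x)" if x: "x \<in> space M" for x
  proof -
    obtain P where "P \<in> \<P>" "x \<in> P" using \<P>(4) x by auto
    then have i0: "(g x, P) \<in> I" "x \<in> C (g x, P)" using x by (auto simp: I_def C_def)
    have "fst i * indicator (C i) x = (if i = (g x, P) then g x else 0)" if "i \<in> I" for i
      using disj[unfolded disjoint_family_on_def, rule_format, OF that i0(1)] i0(2)
      by (auto simp: indicator_def)
    then have "(\<Sum>i\<in>I. fst i * indicator (C i) x) = (\<Sum>i\<in>I. if i = (g x, P) then g x else 0)"
      by (rule sum.cong[OF refl])
    also have "\<dots> = g x" using i0(1) by (simp add: sum.delta[OF fin])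
    finally show ?thesis by simp
  qed
  moreover have "\<exists>P\<in>\<P>. C i \<subseteq> P" "fst i \<in> g ` space M" if "i \<in> I" for i
    using that by (auto simp: I_def C_def)
  ultimately show ?thesis using fin sets disj by (rule_tac that) auto
qed

lemma (in finite_measure) sum_measure_squared_le:
  assumes "finite I" "\<And>i. i \<in> I \<Longrightarrow> C i \<in> sets M" "disjoint_family_on C I"
    and small: "\<And>i. i \<in> I \<Longrightarrow> measure M (C i) \<le> \<epsilon>" and "0 \<le> \<epsilon>"
  shows "(\<Sum>i\<in>I. (measure M (C i))\<^sup>2) \<le> \<epsilon> * measure M (space M)"
proof -
  have "(\<Sum>i\<in>I. (measure M (C i))\<^sup>2) \<le> (\<Sum>i\<in>I. \<epsilon> * measure M (C i))"
    using small by (intro sum_mono) (simp add: power2_eq_square mult_right_mono)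
  also have "\<dots> = \<epsilon> * measure M (\<Union>i\<in>I. C i)"
    using assms(1-3) by (simp add: finite_measure_finite_Union sum_distrib_left image_subset_iff)
  also have "\<dots> \<le> \<epsilon> * measure M (space M)"
    using assms(2) sets.sets_into_space \<open>0 \<le> \<epsilon>\<close> by (intro mult_left_mono finite_measure_mono) auto
  finally show ?thesis .
qed

definition has_fine_partitions :: "'a measure \<Rightarrow> bool" where
  "has_fine_partitions M \<longleftrightarrow> (\<forall>\<epsilon>>0. \<exists>\<P>. finite \<P> \<and> \<P> \<subseteq> sets M \<and> disjoint \<P> \<and>
     \<Union>\<P> = space M \<and> (\<forall>P\<in>\<P>. measure M P < \<epsilon>))"

lemma atomless_measure_singleton:
  assumes "atomless M" "{x} \<in> sets M"
  shows "measure M {x} = 0"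
proof (rule ccontr)
  assume "measure M {x} \<noteq> 0"
  then have "0 < measure M {x}" using measure_nonneg[of M "{x}"] by linarith
  then obtain B where "B \<subseteq> {x}" "0 < measure M B" "measure M B < measure M {x}"
    using assms unfolding atomless_def by blast
  moreover have "B = {} \<or> B = {x}" using \<open>B \<subseteq> {x}\<close> by blast
  ultimately show False by auto
qed

lemma small_ball:
  fixes M :: "'a::metric_space measure"
  assumes "finite_measure M" "sets M = sets borel" "measure M {x} = 0" "0 < \<epsilon>"
  obtains r where "0 < r" "measure M (ball x r) < \<epsilon>"
proof -
  interpret finite_measure M by fact
  define B where "B = (\<lambda>n::nat. ball x (1 / Suc n))"
  have "decseq B" unfolding B_def decseq_def
    by (auto intro!: subset_ball simp: divide_simps)
  moreover have "range B \<subseteq> sets M" by (auto simp: B_def assms(2))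
  moreover have "(\<Inter>n. B n) = {x}"
  proof (intro equalityI subsetI)
    fix y assume y: "y \<in> (\<Inter>n. B n)"
    show "y \<in> {x}"
    proof (rule ccontr)
      assume "y \<notin> {x}"
      then have "0 < dist x y" by simp
      then obtain n where "1 / real (Suc n) < dist x y" using nat_approx_posE by blast
      moreover have "y \<in> B n" using y by blast
      ultimately show False by (simp add: B_def)
    qed
  qed (simp add: B_def)
  ultimately have "(\<lambda>n. measure M (B n)) \<longlonglongrightarrow> 0"
    using finite_Lim_measure_decseq[of B] assms(3) by simp
  then have "\<forall>\<^sub>F n in sequentially. measure M (B n) < \<epsilon>"
    using assms(4) by (rule order_tendstoD(2))
  then obtain n where "measure M (B n) < \<epsilon>" by (auto simp: eventually_sequentially)
  then show ?thesis using that[of "1 / Suc n"] by (simp add: B_def)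
qed

lemma countable_cover_small_measure:
  fixes M :: "'a::{metric_space, second_countable_topology} measure"
  assumes "finite_measure M" and borel: "sets M = sets borel" and "\<And>x. measure M {x} = 0"
    and "0 < \<epsilon>"
  obtains G :: "nat \<Rightarrow> 'a set" where "range G \<subseteq> sets M" "(\<Union>n. G n) = UNIV" "\<And>n. measure M (G n) < \<epsilon>"
proof -
  have "\<forall>x. \<exists>r. 0 < r \<and> measure M (ball x r) < \<epsilon>"
    using small_ball[OF assms(1,2,3) \<open>0 < \<epsilon>\<close>] by metis
  then obtain r where r: "\<And>x. 0 < r x" "\<And>x. measure M (ball x (r x)) < \<epsilon>"
    by metis
  obtain \<F> where \<F>: "\<F> \<subseteq> range (\<lambda>x. ball x (r x))" "countable \<F>"
      "\<Union>\<F> = \<Union>(range (\<lambda>x. ball x (r x)))"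
    using Lindelof[of "range (\<lambda>x. ball x (r x))"] by auto
  have "\<Union>(range (\<lambda>x. ball x (r x))) = UNIV" using r(1) by force
  then have "\<F> \<noteq> {}" using \<F>(3) by auto
  then have G: "range (from_nat_into \<F>) = \<F>" using \<F>(2) by simp
  show ?thesis
  proof
    show "(\<Union>n. from_nat_into \<F> n) = UNIV"
      using G \<F>(3) \<open>\<Union>(range _) = UNIV\<close> by simp
    show "range (from_nat_into \<F>) \<subseteq> sets M" using G \<F>(1) by (auto simp: borel)
    show "measure M (from_nat_into \<F> n) < \<epsilon>" for n
      using G \<F>(1) r(2) by (metis image_iff rangeI subsetD)
  qed
qed

lemma (in finite_measure) finite_partition_small_measure:
  fixes G :: "nat \<Rightarrow> 'a set"
  assumes G: "range G \<subseteq> sets M" "(\<Union>n. G n) = space M" "\<And>n. measure M (G n) < \<epsilon>"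
    and "0 < \<epsilon>"
  shows "\<exists>\<P>. finite \<P> \<and> \<P> \<subseteq> sets M \<and> disjoint \<P> \<and> \<Union>\<P> = space M \<and> (\<forall>P\<in>\<P>. measure M P < \<epsilon>)"
proof -
  have "(\<lambda>N. measure M (\<Union>i<N. G i)) \<longlonglongrightarrow> measure M (\<Union>N. \<Union>i<N. G i)"
    using G(1) by (intro finite_Lim_measure_incseq) (auto simp: incseq_def, force)
  moreover have "(\<Union>N. \<Union>i<N. G i) = space M"
    using UN_UN_finite_eq[of G] G(2) by (simp add: atLeast0LessThan)
  ultimately have "\<forall>\<^sub>F N in sequentially. measure M (space M) - \<epsilon> < measure M (\<Union>i<N. G i)"
    using \<open>0 < \<epsilon>\<close> by (intro order_tendstoD(1)) auto
  then obtain N where "measure M (space M) - \<epsilon> < measure M (\<Union>i<N. G i)"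
    by (auto simp: eventually_sequentially)
  then have rest: "measure M (space M - (\<Union>i<N. G i)) < \<epsilon>"
    using G(1) by (subst finite_measure_Diff) (auto simp: G(2)[symmetric])
  have disjointed_sets: "disjointed G n \<in> sets M" for n
    using G(1) by (intro sets.range_disjointed_sets[THEN subsetD]) auto
  define \<P> where "\<P> = insert (space M - (\<Union>i<N. G i)) (disjointed G ` {..<N})"
  show ?thesis
  proof (intro exI conjI)
    show "finite \<P>" "\<P> \<subseteq> sets M" unfolding \<P>_def using G(1) disjointed_sets by auto
    show "disjoint \<P>" unfolding \<P>_def pairwise_insert
      using disjoint_family_on_disjoint_image[OF disjoint_family_on_mono[OF _ disjoint_family_disjointed]]
      by (auto simp: disjnt_def dest: disjointed_subset[THEN subsetD])
    show "\<Union>\<P> = space M"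
      using finite_UN_disjointed_eq[of G N] G(2) by (auto simp: \<P>_def atLeast0LessThan)
    show "\<forall>P\<in>\<P>. measure M P < \<epsilon>" unfolding \<P>_def
      using rest G disjointed_sets
      by (auto intro: le_less_trans[OF finite_measure_mono[OF disjointed_subset]])
  qed
qed

lemma has_fine_partitions_borel:
  fixes M :: "'a::{metric_space, second_countable_topology} measure"
  assumes "finite_measure M" and borel: "sets M = sets borel" and "\<And>x. measure M {x} = 0"
  shows "has_fine_partitions M"
  unfolding has_fine_partitions_def
proof (intro allI impI)
  fix \<epsilon> :: real assume "0 < \<epsilon>"
  interpret finite_measure M by fact
  obtain G :: "nat \<Rightarrow> 'a set" where "range G \<subseteq> sets M" "(\<Union>n. G n) = UNIV" "\<And>n. measure M (G n) < \<epsilon>"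
    using countable_cover_small_measure[OF assms \<open>0 < \<epsilon>\<close>] by blast
  moreover have "space M = UNIV" using sets_eq_imp_space_eq[OF borel] by simp
  ultimately show "\<exists>\<P>. finite \<P> \<and> \<P> \<subseteq> sets M \<and> disjoint \<P> \<and> \<Union>\<P> = space M \<and> (\<forall>P\<in>\<P>. measure M P < \<epsilon>)"
    using \<open>0 < \<epsilon>\<close> by (intro finite_partition_small_measure) auto
qed

inductive indicator_lincomb :: "'a set set \<Rightarrow> ('a \<Rightarrow> real) \<Rightarrow> bool" for G where
  zero: "indicator_lincomb G (\<lambda>_. 0)"
| add_indicator: "A \<in> G \<Longrightarrow> indicator_lincomb G F \<Longrightarrow>
    indicator_lincomb G (\<lambda>x. F x + c * indicator A x)"

lemma indicator_lincomb_indicator: "A \<in> G \<Longrightarrow> indicator_lincomb G (indicator A)"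
  using indicator_lincomb.add_indicator[OF _ indicator_lincomb.zero, of A G 1] by simp

lemma indicator_lincomb_add:
  assumes "indicator_lincomb G F" "indicator_lincomb G F'"
  shows "indicator_lincomb G (\<lambda>x. F x + F' x)"
  using assms(2,1)
proof (induction F')
  case zero
  then show ?case by simp
next
  case (add_indicator A F' c)
  then have "indicator_lincomb G (\<lambda>x. (F x + F' x) + c * indicator A x)"
    by (intro indicator_lincomb.add_indicator)
  then show ?case by (simp add: add.assoc)
qed

lemma indicator_lincomb_scale:
  assumes "indicator_lincomb G F"
  shows "indicator_lincomb G (\<lambda>x. a * F x)"
  using assms
proof (induction F)
  case zero
  then show ?case by (simp add: indicator_lincomb.zero)
next
  case (add_indicator A F c)
  then have "indicator_lincomb G (\<lambda>x. a * F x + (a * c) * indicator A x)"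
    by (intro indicator_lincomb.add_indicator)
  then show ?case by (simp add: algebra_simps)
qed

lemma indicator_lincomb_sum:
  assumes "\<And>i. i < (n::nat) \<Longrightarrow> indicator_lincomb G (F i)"
  shows "indicator_lincomb G (\<lambda>x. \<Sum>i<n. F i x)"
  using assms
proof (induction n)
  case 0
  then show ?case by (simp add: indicator_lincomb.zero)
next
  case (Suc n)
  then have "indicator_lincomb G (\<lambda>x. (\<Sum>i<n. F i x) + F n x)"
    by (intro indicator_lincomb_add) auto
  then show ?case by simp
qed

lemma indicator_lincomb_explicit:
  assumes "indicator_lincomb G F"
  shows "\<exists>n c A. (\<forall>k<n. A k \<in> G) \<and> F = (\<lambda>x. \<Sum>k<(n::nat). c k * indicator (A k) x)"
  using assms
proof induction
  case zero
  show ?case by (intro exI[of _ 0]) simp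
next
  case (add_indicator A0 F c0)
  then obtain n c A where "\<forall>k<n. A k \<in> G" "F = (\<lambda>x. \<Sum>k<(n::nat). c k * indicator (A k) x)"
    by blast
  with add_indicator.hyps show ?case
    by (intro exI[of _ "Suc n"] exI[of _ "c(n := c0)"] exI[of _ "A(n := A0)"])
       (auto simp: less_Suc_eq intro!: sum.cong)
qed

lemma indicator_lincomb_rectangles_explicit:
  assumes "indicator_lincomb {A \<times> B | A B. A \<in> sets M \<and> B \<in> sets N} F"
  shows "\<exists>n c A B. (\<forall>k. A k \<in> sets M \<and> B k \<in> sets N)
    \<and> F = (\<lambda>z. \<Sum>k<(n::nat). c k * indicator (A k \<times> B k) z)"
proof -
  obtain n :: nat and c R where R: "\<forall>k<n. R k \<in> {A \<times> B | A B. A \<in> sets M \<and> B \<in> sets N}"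
    and F: "F = (\<lambda>z. \<Sum>k<n. c k * indicator (R k) z)"
    using indicator_lincomb_explicit[OF assms] by blast
  \<comment> \<open>beyond \<open>n\<close> the sets are irrelevant; choosing them measurable keeps the statement total\<close>
  have "\<forall>k. \<exists>A B. A \<in> sets M \<and> B \<in> sets N \<and> (k < n \<longrightarrow> R k = A \<times> B)"
  proof
    fix k
    show "\<exists>A B. A \<in> sets M \<and> B \<in> sets N \<and> (k < n \<longrightarrow> R k = A \<times> B)"
    proof (cases "k < n")
      case True
      then show ?thesis using R by blast
    qed blast
  qed
  then obtain A B where "\<And>k. A k \<in> sets M" "\<And>k. B k \<in> sets N" "\<And>k. k < n \<Longrightarrow> R k = A k \<times> B k"
    by metis
  with F show ?thesis by (intro exI[of _ n] exI[of _ c] exI[of _ A] exI[of _ B]) (auto intro: sum.cong)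
qed

lemma simple_function_indicator_lincomb:
  assumes "G \<subseteq> sets M" "indicator_lincomb G F"
  shows "simple_function M F"
  using assms(2) by induction (use assms(1) in auto)

definition L1_approximable :: "'a measure \<Rightarrow> 'a set set \<Rightarrow> 'a set \<Rightarrow> bool" where
  "L1_approximable M G A \<longleftrightarrow>
     (\<forall>\<delta>>0. \<exists>F. indicator_lincomb G F \<and> (\<integral>x. \<bar>indicator A x - F x\<bar> \<partial>M) < \<delta>)"

lemma (in finite_measure) integrable_abs_indicator_diff:
  assumes "G \<subseteq> sets M" "B \<in> sets M" "indicator_lincomb G F"
  shows "integrable M (\<lambda>x. \<bar>indicator B x - F x\<bar>)"
  using simple_function_diff[OF simple_function_indicator[OF assms(2)]
      simple_function_indicator_lincomb[OF assms(1,3)]]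
  by (rule integrable_abs_simple_function)

lemma L1_approximable_generator: "A \<in> G \<Longrightarrow> L1_approximable M G A"
  unfolding L1_approximable_def by (auto intro!: exI[of _ "indicator A"] indicator_lincomb_indicator)

lemma L1_approximable_empty: "L1_approximable M G {}"
  unfolding L1_approximable_def by (auto intro!: exI[of _ "\<lambda>_. 0"] indicator_lincomb.zero)

lemma L1_approximable_compl:
  assumes space: "space M \<in> G" and A: "L1_approximable M G A"
  shows "L1_approximable M G (space M - A)"
  unfolding L1_approximable_def
proof (intro allI impI)
  fix \<delta> :: real assume "0 < \<delta>"
  then obtain F where F: "indicator_lincomb G F" "(\<integral>x. \<bar>indicator A x - F x\<bar> \<partial>M) < \<delta>"
    using A unfolding L1_approximable_def by blast
  have "indicator_lincomb G (\<lambda>x. indicator (space M) x + (-1) * F x)"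
    using indicator_lincomb_add[OF indicator_lincomb_indicator[OF space] indicator_lincomb_scale[OF F(1)]] .
  moreover have "(\<integral>x. \<bar>indicator (space M - A) x - (indicator (space M) x + (-1) * F x)\<bar> \<partial>M)
      = (\<integral>x. \<bar>indicator A x - F x\<bar> \<partial>M)"
    by (rule Bochner_Integration.integral_cong) (auto simp: indicator_def abs_minus_commute)
  ultimately show "\<exists>F. indicator_lincomb G F \<and> (\<integral>x. \<bar>indicator (space M - A) x - F x\<bar> \<partial>M) < \<delta>"
    using F(2) by (intro exI conjI) (assumption | linarith)+
qed

lemma (in finite_measure) L1_error_disjoint_UN:
  fixes A :: "nat \<Rightarrow> 'a set"
  assumes G_sets: "G \<subseteq> sets M" and range_A: "range A \<subseteq> sets M" and disj: "disjoint_family A"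
    and Fs: "\<And>i. indicator_lincomb G (Fs i)"
  shows "(\<integral>x. \<bar>indicator (\<Union>i. A i) x - (\<Sum>i<N. Fs i x)\<bar> \<partial>M)
    \<le> (measure M (\<Union>i. A i) - (\<Sum>i<N. measure M (A i)))
      + (\<Sum>i<N. \<integral>x. \<bar>indicator (A i) x - Fs i x\<bar> \<partial>M)"
proof -
  have A_sets: "A i \<in> sets M" for i using range_A by auto
  define V where "V = (\<Union>i. A i)"
  have V: "V \<in> sets M" unfolding V_def using range_A by (rule sets.countable_UN)
  note integrable_err = integrable_abs_indicator_diff[OF G_sets]
  have F: "indicator_lincomb G (\<lambda>x. \<Sum>i<N. Fs i x)" using Fs by (rule indicator_lincomb_sum)
  have head: "(\<Sum>i<N. indicator (A i) x) = (indicator (\<Union>i<N. A i) x :: real)" for x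
    using disjoint_family_on_mono[OF subset_UNIV disj] by (simp add: indicator_UN_disjoint)
  have err_le: "\<bar>indicator V x - (\<Sum>i<N. Fs i x)\<bar>
      \<le> (indicator V x - (\<Sum>i<N. indicator (A i) x)) + (\<Sum>i<N. \<bar>indicator (A i) x - Fs i x\<bar>)" for x
  proof -
    have "(\<Sum>i<N. indicator (A i) x) \<le> (indicator V x :: real)"
      unfolding head by (auto simp: V_def indicator_def)
    moreover have "\<bar>\<Sum>i<N. indicator (A i) x - Fs i x\<bar> \<le> (\<Sum>i<N. \<bar>indicator (A i) x - Fs i x\<bar>)"
      by (rule sum_abs)
    ultimately show ?thesis by (simp add: sum_subtractf)
  qed
  have int_head: "integrable M (\<lambda>x. indicator V x - (\<Sum>i<N. indicator (A i) x) :: real)"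
    using V A_sets by (auto simp: less_top[symmetric])
  have int_tail: "integrable M (\<lambda>x. \<Sum>i<N. \<bar>indicator (A i) x - Fs i x\<bar>)"
    using integrable_err[OF A_sets Fs] by auto
  have "(\<integral>x. \<bar>indicator V x - (\<Sum>i<N. Fs i x)\<bar> \<partial>M)
      \<le> (\<integral>x. (indicator V x - (\<Sum>i<N. indicator (A i) x)) + (\<Sum>i<N. \<bar>indicator (A i) x - Fs i x\<bar>) \<partial>M)"
    using integrable_err[OF V F] int_head int_tail err_le
    by (intro integral_mono Bochner_Integration.integrable_add) auto
  also have "\<dots> = (measure M V - (\<Sum>i<N. measure M (A i)))
      + (\<Sum>i<N. \<integral>x. \<bar>indicator (A i) x - Fs i x\<bar> \<partial>M)"
    using int_head int_tail integrable_err[OF A_sets Fs] A_sets V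
    by (simp add: integral_sum less_top[symmetric])
  finally show ?thesis unfolding V_def .
qed

text \<open>Approximate the first \<open>N\<close> sets, where \<open>N\<close> is chosen so that the tail has measure
  below \<open>\<delta> / 2\<close>, each to within \<open>\<delta> / (2 (N + 1))\<close>.\<close>
lemma (in finite_measure) L1_approximable_disjoint_UN:
  fixes A :: "nat \<Rightarrow> 'a set"
  assumes G_sets: "G \<subseteq> sets M" and range_A: "range A \<subseteq> sets M" and disj: "disjoint_family A"
    and approx: "\<And>i. L1_approximable M G (A i)"
  shows "L1_approximable M G (\<Union>i. A i)"
  unfolding L1_approximable_def
proof (intro allI impI)
  fix \<delta> :: real assume "0 < \<delta>"
  have "(\<lambda>n. \<Sum>i<n. measure M (A i)) \<longlonglongrightarrow> measure M (\<Union>i. A i)"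
    using finite_measure_UNION[OF range_A disj] by (simp add: sums_def)
  then have "\<forall>\<^sub>F n in sequentially. measure M (\<Union>i. A i) - \<delta> / 2 < (\<Sum>i<n. measure M (A i))"
    using \<open>0 < \<delta>\<close> by (intro order_tendstoD(1)) auto
  then obtain N where "\<forall>n\<ge>N. measure M (\<Union>i. A i) - \<delta> / 2 < (\<Sum>i<n. measure M (A i))"
    unfolding eventually_sequentially ..
  then have N: "measure M (\<Union>i. A i) - \<delta> / 2 < (\<Sum>i<N. measure M (A i))" by blast
  define e where "e = \<delta> / (2 * (N + 1))"
  have "0 < e" using \<open>0 < \<delta>\<close> by (simp add: e_def)
  then have "\<forall>i. \<exists>F. indicator_lincomb G F \<and> (\<integral>x. \<bar>indicator (A i) x - F x\<bar> \<partial>M) < e"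
    using approx unfolding L1_approximable_def by blast
  then obtain Fs where Fs: "\<And>i. indicator_lincomb G (Fs i)"
      "\<And>i. (\<integral>x. \<bar>indicator (A i) x - Fs i x\<bar> \<partial>M) < e"
    by metis
  have "(\<Sum>i<N. \<integral>x. \<bar>indicator (A i) x - Fs i x\<bar> \<partial>M) \<le> (\<Sum>i<N. e)"
    using Fs(2) by (intro sum_mono less_imp_le)
  also have "\<dots> = N * e" by simp
  also have "\<dots> < \<delta> / 2" using \<open>0 < \<delta>\<close> by (simp add: e_def field_simps)
  finally have "(\<integral>x. \<bar>indicator (\<Union>i. A i) x - (\<Sum>i<N. Fs i x)\<bar> \<partial>M) < \<delta>"
    using L1_error_disjoint_UN[where Fs = Fs and N = N, OF G_sets range_A disj Fs(1)] N by linarith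
  moreover have "indicator_lincomb G (\<lambda>x. \<Sum>i<N. Fs i x)" using Fs(1) by (rule indicator_lincomb_sum)
  ultimately show "\<exists>F. indicator_lincomb G F \<and> (\<integral>x. \<bar>indicator (\<Union>i. A i) x - F x\<bar> \<partial>M) < \<delta>"
    by blast
qed

lemma (in finite_measure) L1_approximable_sets:
  assumes gen: "sets M = sigma_sets (space M) G" "Int_stable G" "G \<subseteq> Pow (space M)"
    and space: "space M \<in> G" and A: "A \<in> sets M"
  shows "L1_approximable M G A"
proof -
  have G_sets: "G \<subseteq> sets M" unfolding gen(1) by (rule sigma_sets_superset_generator)
  from gen(2,3) A[unfolded gen(1)] show ?thesis
  proof (induction rule: sigma_sets_induct_disjoint)
    case (union A)
    then show ?case unfolding gen(1)[symmetric] by (intro L1_approximable_disjoint_UN G_sets)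
  qed (auto intro: L1_approximable_generator L1_approximable_empty L1_approximable_compl space)
qed

section \<open>Bilinear forms of bounded kernels\<close>

definition kernel_form :: "'a measure \<Rightarrow> ('a \<Rightarrow> 'a \<Rightarrow> real) \<Rightarrow> ('a \<Rightarrow> real) \<Rightarrow> ('a \<Rightarrow> real) \<Rightarrow> real"
  where "kernel_form M K f g = (\<integral>z. K (fst z) (snd z) * f (fst z) * g (snd z) \<partial>(M \<Otimes>\<^sub>M M))"

locale bounded_kernel = prob_space M for M :: "'a measure" +
  fixes K :: "'a \<Rightarrow> 'a \<Rightarrow> real"
  assumes kernel_measurable [measurable]: "case_prod K \<in> borel_measurable (M \<Otimes>\<^sub>M M)"
    and abs_kernel_le_1: "x \<in> space M \<Longrightarrow> y \<in> space M \<Longrightarrow> \<bar>K x y\<bar> \<le> 1"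
begin

sublocale pair: pair_prob_space M M
  by (simp add: pair_prob_space_def pair_sigma_finite_def prob_space_axioms prob_space_imp_sigma_finite)

abbreviation form :: "('a \<Rightarrow> real) \<Rightarrow> ('a \<Rightarrow> real) \<Rightarrow> real"
  where "form \<equiv> kernel_form M K"

lemma integrable_kernel_integrand:
  assumes f: "simple_function M f" and g: "simple_function M g"
  shows "integrable (M \<Otimes>\<^sub>M M) (\<lambda>z. K (fst z) (snd z) * f (fst z) * g (snd z))"
proof -
  obtain Cf Cg where Cf: "\<And>x. x \<in> space M \<Longrightarrow> \<bar>f x\<bar> \<le> Cf"
    and Cg: "\<And>x. x \<in> space M \<Longrightarrow> \<bar>g x\<bar> \<le> Cg"
    using simple_function_bounded[OF f] simple_function_bounded[OF g] by metis
  have [measurable]: "f \<in> borel_measurable M" "g \<in> borel_measurable M"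
    using f g by (auto intro: borel_measurable_simple_function)
  show ?thesis
  proof (rule pair.P.integrable_const_bound[where B = "Cf * Cg"])
    show "AE z in M \<Otimes>\<^sub>M M. norm (K (fst z) (snd z) * f (fst z) * g (snd z)) \<le> Cf * Cg"
    proof (rule AE_I2)
      fix z assume "z \<in> space (M \<Otimes>\<^sub>M M)"
      then have z: "fst z \<in> space M" "snd z \<in> space M" by (auto simp: space_pair_measure)
      have "\<bar>K (fst z) (snd z)\<bar> * \<bar>f (fst z)\<bar> * \<bar>g (snd z)\<bar> \<le> 1 * Cf * Cg"
        using abs_kernel_le_1[OF z] Cf[OF z(1)] Cg[OF z(2)]
        by (intro mult_mono) (auto intro: order_trans[OF abs_ge_zero])
      then show "norm (K (fst z) (snd z) * f (fst z) * g (snd z)) \<le> Cf * Cg"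
        by (simp add: abs_mult)
    qed
  qed measurable
qed

lemma form_add_left:
  assumes "simple_function M f" "simple_function M f'" "simple_function M g"
  shows "form (\<lambda>x. f x + f' x) g = form f g + form f' g"
  unfolding kernel_form_def
  using integrable_kernel_integrand[OF assms(1,3)] integrable_kernel_integrand[OF assms(2,3)]
  by (simp add: distrib_left distrib_right)

lemma form_add_right:
  assumes "simple_function M f" "simple_function M g" "simple_function M g'"
  shows "form f (\<lambda>x. g x + g' x) = form f g + form f g'"
  unfolding kernel_form_def
  using integrable_kernel_integrand[OF assms(1,2)] integrable_kernel_integrand[OF assms(1,3)]
  by (simp add: distrib_left distrib_right)

lemma form_scale_left: "form (\<lambda>x. a * f x) g = a * form f g"
  unfolding kernel_form_def by (subst integral_mult_right_zero[symmetric]) (simp add: algebra_simps)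

lemma form_scale_right: "form f (\<lambda>x. a * g x) = a * form f g"
  unfolding kernel_form_def by (subst integral_mult_right_zero[symmetric]) (simp add: algebra_simps)

lemma form_zero_left [simp]: "form (\<lambda>_. 0) g = 0"
  and form_zero_right [simp]: "form f (\<lambda>_. 0) = 0"
  by (simp_all add: kernel_form_def)

lemma form_sum_left:
  assumes "finite I" "\<And>i. i \<in> I \<Longrightarrow> simple_function M (f i)" "simple_function M g"
  shows "form (\<lambda>x. \<Sum>i\<in>I. f i x) g = (\<Sum>i\<in>I. form (f i) g)"
  using assms by (induction I rule: finite_induct) (simp_all add: form_add_left)

lemma form_sum_right:
  assumes "finite I" "\<And>i. i \<in> I \<Longrightarrow> simple_function M (g i)" "simple_function M f"
  shows "form f (\<lambda>x. \<Sum>i\<in>I. g i x) = (\<Sum>i\<in>I. form f (g i))"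
  using assms by (induction I rule: finite_induct) (simp_all add: form_add_right)

lemma form_lincomb_indicators:
  assumes "\<And>k. k < (n::nat) \<Longrightarrow> A k \<in> sets M"
  shows "form (\<lambda>x. \<Sum>k<n. c k * indicator (A k) x) (\<lambda>x. \<Sum>k<n. c k * indicator (A k) x)
    = (\<Sum>k<n. \<Sum>l<n. c k * c l * form (indicator (A k)) (indicator (A l)))"
proof -
  have simple: "simple_function M (\<lambda>x. c k * indicator (A k) x)" if "k < n" for k
    using assms[OF that] by auto
  have "form (\<lambda>x. \<Sum>k<n. c k * indicator (A k) x) (\<lambda>x. \<Sum>k<n. c k * indicator (A k) x)
      = (\<Sum>k<n. form (\<lambda>x. c k * indicator (A k) x) (\<lambda>x. \<Sum>l<n. c l * indicator (A l) x))"
    by (intro form_sum_left simple_function_sum finite_lessThan simple) simp_all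
  also have "\<dots> = (\<Sum>k<n. \<Sum>l<n. form (\<lambda>x. c k * indicator (A k) x) (\<lambda>x. c l * indicator (A l) x))"
    by (intro sum.cong refl form_sum_right finite_lessThan simple) simp_all
  finally show ?thesis by (simp add: form_scale_left form_scale_right mult.assoc)
qed

lemma form_swap:
  assumes sym: "\<And>x y. x \<in> space M \<Longrightarrow> y \<in> space M \<Longrightarrow> K x y = K y x"
    and [measurable]: "f \<in> borel_measurable M" "g \<in> borel_measurable M"
  shows "form f g = form g f"
proof -
  have "form g f = (\<integral>(x, y). K (fst (y, x)) (snd (y, x)) * g (fst (y, x)) * f (snd (y, x)) \<partial>(M \<Otimes>\<^sub>M M))"
    unfolding kernel_form_def by (rule pair.integral_product_swap[symmetric]) measurable
  also have "\<dots> = form f g"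
    unfolding kernel_form_def
    by (rule Bochner_Integration.integral_cong) (auto simp: space_pair_measure sym)
  finally show ?thesis ..
qed

lemma abs_form_le:
  assumes f: "simple_function M f" and g: "simple_function M g"
  shows "\<bar>form f g\<bar> \<le> (\<integral>x. \<bar>f x\<bar> \<partial>M) * (\<integral>x. \<bar>g x\<bar> \<partial>M)"
proof -
  obtain Cf Cg where Cf: "\<And>x. x \<in> space M \<Longrightarrow> \<bar>f x\<bar> \<le> Cf"
    and Cg: "\<And>x. x \<in> space M \<Longrightarrow> \<bar>g x\<bar> \<le> Cg"
    using simple_function_bounded[OF f] simple_function_bounded[OF g] by metis
  have [measurable]: "f \<in> borel_measurable M" "g \<in> borel_measurable M"
    using f g by (auto intro: borel_measurable_simple_function)
  note product = integral_mult_fst_snd[OF prob_space_axioms prob_space_axioms, of "\<lambda>x. \<bar>f x\<bar>" "\<lambda>x. \<bar>g x\<bar>" Cf Cg]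
  have "\<bar>form f g\<bar> \<le> (\<integral>z. \<bar>K (fst z) (snd z) * f (fst z) * g (snd z)\<bar> \<partial>(M \<Otimes>\<^sub>M M))"
    unfolding kernel_form_def by (rule integral_abs_bound)
  also have "\<dots> \<le> (\<integral>z. \<bar>f (fst z)\<bar> * \<bar>g (snd z)\<bar> \<partial>(M \<Otimes>\<^sub>M M))"
  proof (rule integral_mono)
    show "integrable (M \<Otimes>\<^sub>M M) (\<lambda>z. \<bar>K (fst z) (snd z) * f (fst z) * g (snd z)\<bar>)"
      using integrable_kernel_integrand[OF f g] by (rule integrable_abs)
    show "integrable (M \<Otimes>\<^sub>M M) (\<lambda>z. \<bar>f (fst z)\<bar> * \<bar>g (snd z)\<bar>)"
      using product Cf Cg by simp
    fix z assume "z \<in> space (M \<Otimes>\<^sub>M M)"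
    then have "\<bar>K (fst z) (snd z)\<bar> \<le> 1" by (intro abs_kernel_le_1) (auto simp: space_pair_measure)
    then show "\<bar>K (fst z) (snd z) * f (fst z) * g (snd z)\<bar> \<le> \<bar>f (fst z)\<bar> * \<bar>g (snd z)\<bar>"
      by (simp add: abs_mult mult_left_le_one_le mult.assoc)
  qed
  also have "\<dots> = (\<integral>x. \<bar>f x\<bar> \<partial>M) * (\<integral>x. \<bar>g x\<bar> \<partial>M)"
    using product Cf Cg by simp
  finally show ?thesis .
qed

lemma form_indicator_indicator_le:
  assumes "C \<in> sets M"
  shows "\<bar>form (indicator C) (indicator C)\<bar> \<le> (measure M C)\<^sup>2"
  using abs_form_le[of "indicator C" "indicator C"] assms
  by (simp add: power2_eq_square finite_measure_axioms)

lemma form_cong: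
  assumes "\<And>x. x \<in> space M \<Longrightarrow> f x = f' x" "\<And>x. x \<in> space M \<Longrightarrow> g x = g' x"
  shows "form f g = form f' g'"
  unfolding kernel_form_def using assms
  by (intro Bochner_Integration.integral_cong) (auto simp: space_pair_measure)

lemma form_interpolate:
  assumes h: "simple_function M h" and c: "simple_function M c"
  shows "form (\<lambda>x. h x + v * c x) (\<lambda>x. h x + v * c x)
    = v * form (\<lambda>x. h x + c x) (\<lambda>x. h x + c x) + (1 - v) * form h h - v * (1 - v) * form c c"
proof -
  have vc: "simple_function M (\<lambda>x. v * c x)" using c by auto
  have "form (\<lambda>x. h x + v * c x) (\<lambda>x. h x + v * c x)
      = form h h + v * form h c + v * form c h + v * v * form c c"
    using h c vc by (simp add: form_add_left form_add_right form_scale_left form_scale_right algebra_simps)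
  moreover have "form (\<lambda>x. h x + c x) (\<lambda>x. h x + c x) = form h h + form h c + form c h + form c c"
    using h c by (simp add: form_add_left form_add_right)
  ultimately show ?thesis by (simp add: algebra_simps)
qed

text \<open>The form is quadratic in \<open>v\<close> with leading coefficient \<open>form (indicator C) (indicator C)\<close>,
  which is bounded by \<open>(measure M C)\<^sup>2\<close>; so moving \<open>v\<close> from \<open>{0, 1}\<close> into \<open>[0, 1]\<close> loses at
  most that much.\<close>
lemma form_interpolate_ge:
  assumes h: "simple_function M h" and C: "C \<in> sets M" and v: "0 \<le> v" "v \<le> 1"
    and lower0: "- s \<le> form h h"
    and lower1: "- s \<le> form (\<lambda>x. h x + indicator C x) (\<lambda>x. h x + indicator C x)"
  shows "- (s + (measure M C)\<^sup>2) \<le> form (\<lambda>x. h x + v * indicator C x) (\<lambda>x. h x + v * indicator C x)"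
proof -
  have "v * (1 - v) * form (indicator C) (indicator C) \<le> v * (1 - v) * \<bar>form (indicator C) (indicator C)\<bar>"
    using v by (intro mult_left_mono) auto
  also have "\<dots> \<le> 1 * (measure M C)\<^sup>2"
    using v form_indicator_indicator_le[OF C] by (intro mult_mono) (auto simp: mult_le_one)
  finally have leading: "v * (1 - v) * form (indicator C) (indicator C) \<le> (measure M C)\<^sup>2"
    by simp
  have "v * (- s) + (1 - v) * (- s)
      \<le> v * form (\<lambda>x. h x + indicator C x) (\<lambda>x. h x + indicator C x) + (1 - v) * form h h"
    using lower0 lower1 v by (intro add_mono mult_left_mono) auto
  with leading show ?thesis
    unfolding form_interpolate[OF h simple_function_indicator[OF C]] by (simp add: algebra_simps)
qed

lemma form_indicator_L1_continuous:
  assumes A: "A \<in> sets M" and F: "simple_function M F"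
    and \<delta>: "\<delta> = (\<integral>x. \<bar>indicator A x - F x\<bar> \<partial>M)"
  shows "form F F - \<delta> * (2 + \<delta>) \<le> form (indicator A) (indicator A)"
proof -
  define e where "e = (\<lambda>x. indicator A x - F x :: real)"
  have e: "simple_function M e" and IA: "simple_function M (indicator A)"
    using A F by (auto simp: e_def)
  have "0 \<le> \<delta>" unfolding \<delta> by simp
  have "form (indicator A) (indicator A) = form e (indicator A) + form F (indicator A)"
    using form_add_left[OF e F IA] by (simp add: e_def)
  also have "form F (indicator A) = form F F + form F e"
    using form_add_right[OF F F e] by (simp add: e_def)
  finally have split: "form (indicator A) (indicator A) = form F F + form e (indicator A) + form F e"
    by simp
  have "\<bar>form e (indicator A)\<bar> \<le> \<delta> * measure M A"
    using abs_form_le[OF e IA] A by (simp add: \<delta> e_def finite_measure_axioms)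
  also have "\<dots> \<le> \<delta>" using \<open>0 \<le> \<delta>\<close> by (simp add: mult_left_le)
  finally have left: "\<bar>form e (indicator A)\<bar> \<le> \<delta>" .
  have "(\<integral>x. \<bar>F x\<bar> \<partial>M) \<le> (\<integral>x. indicator A x + \<bar>e x\<bar> \<partial>M)"
    using integrable_abs_simple_function[OF F] integrable_abs_simple_function[OF e] A
    by (intro integral_mono Bochner_Integration.integrable_add integrable_real_indicator)
       (auto simp: e_def indicator_def less_top[symmetric])
  also have "\<dots> = measure M A + \<delta>"
    using integrable_abs_simple_function[OF e] A by (simp add: \<delta> e_def less_top[symmetric])
  also have "\<dots> \<le> 1 + \<delta>" by simp
  finally have "(\<integral>x. \<bar>F x\<bar> \<partial>M) \<le> 1 + \<delta>" .
  have "\<bar>form F e\<bar> \<le> (\<integral>x. \<bar>F x\<bar> \<partial>M) * \<delta>"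
    using abs_form_le[OF F e] by (simp add: \<delta> e_def)
  also have "\<dots> \<le> (1 + \<delta>) * \<delta>"
    using \<open>(\<integral>x. \<bar>F x\<bar> \<partial>M) \<le> 1 + \<delta>\<close> \<open>0 \<le> \<delta>\<close> by (rule mult_right_mono)
  finally show ?thesis using left split by (simp add: algebra_simps abs_le_iff)
qed

lemma form_indicator_nonneg_by_density:
  assumes gen: "sets M = sigma_sets (space M) G" "Int_stable G" "G \<subseteq> Pow (space M)" "space M \<in> G"
    and nonneg: "\<And>F. indicator_lincomb G F \<Longrightarrow> 0 \<le> form F F" and A: "A \<in> sets M"
  shows "0 \<le> form (indicator A) (indicator A)"
proof (rule field_le_epsilon)
  fix \<epsilon> :: real assume "0 < \<epsilon>"
  define \<delta> where "\<delta> = min 1 (\<epsilon> / 3)"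
  have "0 < \<delta>" using \<open>0 < \<epsilon>\<close> by (simp add: \<delta>_def)
  then obtain F where F: "indicator_lincomb G F" "(\<integral>x. \<bar>indicator A x - F x\<bar> \<partial>M) < \<delta>"
    using L1_approximable_sets[OF gen A] unfolding L1_approximable_def by blast
  define d where "d = (\<integral>x. \<bar>indicator A x - F x\<bar> \<partial>M)"
  have "G \<subseteq> sets M" unfolding gen(1) by (rule sigma_sets_superset_generator)
  then have "form F F - d * (2 + d) \<le> form (indicator A) (indicator A)"
    using A simple_function_indicator_lincomb[OF _ F(1)] by (intro form_indicator_L1_continuous) (auto simp: d_def)
  moreover have "d * (2 + d) \<le> \<epsilon>"
  proof -
    have "0 \<le> d" "d \<le> \<delta>" "\<delta> \<le> 1" "3 * \<delta> \<le> \<epsilon>" using F(2) by (auto simp: d_def \<delta>_def)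
    then have "d * (2 + d) \<le> \<delta> * 3" by (intro mult_mono) auto
    then show ?thesis using \<open>3 * \<delta> \<le> \<epsilon>\<close> by simp
  qed
  ultimately show "0 \<le> form (indicator A) (indicator A) + \<epsilon>" using nonneg[OF F(1)] by simp
qed

end

locale dense_centred_kernel = bounded_kernel +
  assumes kernel_symmetric: "x \<in> space M \<Longrightarrow> y \<in> space M \<Longrightarrow> K x y = K y x"
    and kernel_row_integral: "AE x in M. (\<integral>y. K x y \<partial>M) = 0"
    and form_indicator_nonneg: "U \<in> sets M \<Longrightarrow> 0 \<le> form (indicator U) (indicator U)"
    and fine_partitions: "has_fine_partitions M"
begin

lemma form_const_right:
  assumes f: "simple_function M f"
  shows "form f (\<lambda>_. c) = 0"
proof -
  have [measurable]: "f \<in> borel_measurable M" using f by (rule borel_measurable_simple_function)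
  have "form f (\<lambda>_. c) = (\<integral>x. (\<integral>y. K (fst (x, y)) (snd (x, y)) * f (fst (x, y)) * c \<partial>M) \<partial>M)"
    unfolding kernel_form_def
    by (rule pair.integral_fst'[symmetric, OF integrable_kernel_integrand[OF f simple_function_const]])
  also have "\<dots> = (\<integral>x. 0 \<partial>M)"
  proof (rule integral_cong_AE)
    show "AE x in M. (\<integral>y. K (fst (x, y)) (snd (x, y)) * f (fst (x, y)) * c \<partial>M) = 0"
      using kernel_row_integral by eventually_elim simp
  qed measurable
  finally show ?thesis by simp
qed

lemma form_const_left:
  assumes "simple_function M f"
  shows "form (\<lambda>_. c) f = 0"
  using form_swap[OF kernel_symmetric] form_const_right[OF assms] assms
  by (metis borel_measurable_const borel_measurable_simple_function)

text \<open>Induction on \<open>I\<close> with \<open>E\<close> generalised: the endpoint cases \<open>v a = 0\<close> and \<open>v a = 1\<close>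
  are the induction hypothesis for \<open>E\<close> and for \<open>E \<union> C a\<close>.\<close>
lemma form_step_function_ge:
  assumes "finite I" "\<And>i. i \<in> I \<Longrightarrow> C i \<in> sets M" "disjoint_family_on C I"
    and "E \<in> sets M" "\<And>i. i \<in> I \<Longrightarrow> E \<inter> C i = {}" "\<And>i. i \<in> I \<Longrightarrow> 0 \<le> v i \<and> v i \<le> 1"
  shows "- (\<Sum>i\<in>I. (measure M (C i))\<^sup>2)
    \<le> form (\<lambda>x. indicator E x + (\<Sum>i\<in>I. v i * indicator (C i) x))
            (\<lambda>x. indicator E x + (\<Sum>i\<in>I. v i * indicator (C i) x))"
  using assms
proof (induction I arbitrary: E rule: finite_induct)
  case empty
  then show ?case using form_indicator_nonneg[of E] by simp
next
  case (insert a I E)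
  define h where "h = (\<lambda>x. indicator E x + (\<Sum>i\<in>I. v i * indicator (C i) x))"
  have Ca: "C a \<in> sets M" and v: "0 \<le> v a" "v a \<le> 1" using insert.prems by auto
  have disj: "disjoint_family_on C I" using insert.prems(2) disjoint_family_on_mono by blast
  have h: "simple_function M h" unfolding h_def using insert.prems
    by (intro simple_function_add simple_function_indicator simple_function_sum simple_function_mult
        simple_function_const) auto
  have "E \<inter> C a = {}" using insert.prems(4) by auto
  then have "(\<lambda>x. h x + indicator (C a) x)
      = (\<lambda>x. indicator (E \<union> C a) x + (\<Sum>i\<in>I. v i * indicator (C i) x))"
    by (simp add: h_def indicator_disj_union fun_eq_iff)
  moreover have "(E \<union> C a) \<inter> C i = {}" if "i \<in> I" for i
    using that insert.prems(2,4) insert.hyps(2) unfolding disjoint_family_on_def by auto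
  ultimately have "- (\<Sum>i\<in>I. (measure M (C i))\<^sup>2)
      \<le> form (\<lambda>x. h x + indicator (C a) x) (\<lambda>x. h x + indicator (C a) x)"
    by (simp only:) (rule insert.IH; use insert.prems disj Ca in auto)
  moreover have "- (\<Sum>i\<in>I. (measure M (C i))\<^sup>2) \<le> form h h"
    unfolding h_def by (rule insert.IH) (use insert.prems disj in auto)
  ultimately have "- ((\<Sum>i\<in>I. (measure M (C i))\<^sup>2) + (measure M (C a))\<^sup>2)
      \<le> form (\<lambda>x. h x + v a * indicator (C a) x) (\<lambda>x. h x + v a * indicator (C a) x)"
    using form_interpolate_ge[OF h Ca v] by blast
  moreover have "(\<lambda>x. indicator E x + (\<Sum>i\<in>insert a I. v i * indicator (C i) x))
      = (\<lambda>x. h x + v a * indicator (C a) x)"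
    by (simp only: sum.insert[OF insert.hyps] h_def add_ac)
  ultimately show ?case by (simp only: sum.insert[OF insert.hyps] add_ac)
qed

lemma form_unit_simple_nonneg:
  assumes g: "simple_function M g" and g01: "\<And>x. x \<in> space M \<Longrightarrow> 0 \<le> g x \<and> g x \<le> 1"
  shows "0 \<le> form g g"
proof (rule field_le_epsilon)
  fix \<epsilon> :: real assume "0 < \<epsilon>"
  then obtain \<P> where \<P>: "finite \<P>" "\<P> \<subseteq> sets M" "disjoint \<P>" "\<Union>\<P> = space M"
      "\<And>P. P \<in> \<P> \<Longrightarrow> measure M P < \<epsilon>"
    using fine_partitions unfolding has_fine_partitions_def by meson
  obtain I :: "(real \<times> 'a set) set" and C where I: "finite I" "\<And>i. i \<in> I \<Longrightarrow> C i \<in> sets M"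
      "disjoint_family_on C I" "\<And>i. i \<in> I \<Longrightarrow> \<exists>P\<in>\<P>. C i \<subseteq> P"
      "\<And>i. i \<in> I \<Longrightarrow> fst i \<in> g ` space M"
      "\<And>x. x \<in> space M \<Longrightarrow> g x = (\<Sum>i\<in>I. fst i * indicator (C i) x)"
    using simple_function_partition_refinement[OF g \<P>(1-4)] by blast
  have "- (\<Sum>i\<in>I. (measure M (C i))\<^sup>2)
      \<le> form (\<lambda>x. indicator {} x + (\<Sum>i\<in>I. fst i * indicator (C i) x))
              (\<lambda>x. indicator {} x + (\<Sum>i\<in>I. fst i * indicator (C i) x))"
  proof (intro form_step_function_ge I(1-3))
    show "0 \<le> fst i \<and> fst i \<le> 1" if "i \<in> I" for i
      using I(5)[OF that] g01 by auto
  qed auto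
  also have "\<dots> = form g g" using I(6) by (intro form_cong) auto
  finally have "- (\<Sum>i\<in>I. (measure M (C i))\<^sup>2) \<le> form g g" .
  moreover have "measure M (C i) \<le> \<epsilon>" if "i \<in> I" for i
    using I(2,4)[OF that] \<P>(2,5) by (metis finite_measure_mono less_imp_le order_trans subsetD)
  then have "(\<Sum>i\<in>I. (measure M (C i))\<^sup>2) \<le> \<epsilon>"
    using sum_measure_squared_le[OF I(1-3)] \<open>0 < \<epsilon>\<close> by (simp add: prob_space)
  ultimately show "0 \<le> form g g + \<epsilon>" by linarith
qed

lemma form_add_const:
  assumes f: "simple_function M f"
  shows "form (\<lambda>x. f x + c) (\<lambda>x. f x + c) = form f f"
proof -
  have fc: "simple_function M (\<lambda>x. f x + c)" using f by simp
  have "form (\<lambda>x. f x + c) (\<lambda>x. f x + c) = form f (\<lambda>x. f x + c) + form (\<lambda>_. c) (\<lambda>x. f x + c)"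
    using f fc by (intro form_add_left) auto
  also have "form f (\<lambda>x. f x + c) = form f f + form f (\<lambda>_. c)"
    using f by (intro form_add_right) auto
  finally show ?thesis using f fc by (simp add: form_const_left form_const_right)
qed

lemma form_simple_nonneg:
  assumes f: "simple_function M f"
  shows "0 \<le> form f f"
proof -
  obtain C where C: "\<And>x. x \<in> space M \<Longrightarrow> \<bar>f x\<bar> \<le> C"
    using simple_function_bounded[OF f] by blast
  define D where "D = \<bar>C\<bar> + 1"
  have "0 < D" by (simp add: D_def)
  define g where "g = (\<lambda>x. (f x + D) / (2 * D))"
  have g: "simple_function M g" unfolding g_def using f by simp
  have "0 \<le> g x \<and> g x \<le> 1" if "x \<in> space M" for x
  proof -
    have "- D \<le> f x" "f x \<le> D" using C[OF that] by (auto simp: D_def abs_le_iff)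
    then show ?thesis using \<open>0 < D\<close> by (simp add: g_def divide_le_eq)
  qed
  then have "0 \<le> form g g" by (rule form_unit_simple_nonneg[OF g])
  have "f = (\<lambda>x. (2 * D) * g x + (- D))"
    using \<open>0 < D\<close> by (simp add: g_def fun_eq_iff)
  then have "form f f = form (\<lambda>x. (2 * D) * g x) (\<lambda>x. (2 * D) * g x)"
    using g by (simp only: form_add_const simple_function_mult simple_function_const)
  also have "\<dots> = (2 * D) * (2 * D) * form g g" by (simp add: form_scale_left form_scale_right)
  finally show ?thesis using \<open>0 \<le> form g g\<close> by simp
qed

lemma pos_semidef_gram:
  assumes "\<And>k. k < (n::nat) \<Longrightarrow> A k \<in> sets M"
  shows "pos_semidef n (\<lambda>k l. form (indicator (A k)) (indicator (A l)))"
  unfolding pos_semidef_def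
proof
  fix c :: "nat \<Rightarrow> real"
  have "simple_function M (\<lambda>x. \<Sum>k<n. c k * indicator (A k) x)"
    using assms by (intro simple_function_sum simple_function_mult simple_function_indicator
        simple_function_const) auto
  from form_simple_nonneg[OF this]
  show "0 \<le> (\<Sum>k<n. \<Sum>l<n. c k * c l * form (indicator (A k)) (indicator (A l)))"
    by (simp only: form_lincomb_indicators[OF assms])
qed

end

section \<open>Graphons and their tensor square\<close>

lemma measurable_kernel_comp:
  assumes "case_prod W \<in> borel_measurable (M \<Otimes>\<^sub>M M)" "f \<in> measurable N M" "g \<in> measurable N M"
  shows "(\<lambda>z. W (f z) (g z)) \<in> borel_measurable N"
  using measurable_compose[OF measurable_Pair[OF assms(2,3)] assms(1)] by simp

lemma graphonD:
  assumes "graphon M W"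
  shows graphon_measurable: "case_prod W \<in> borel_measurable (M \<Otimes>\<^sub>M M)"
    and "x \<in> space M \<Longrightarrow> y \<in> space M \<Longrightarrow> W x y = W y x"
    and "x \<in> space M \<Longrightarrow> y \<in> space M \<Longrightarrow> 0 \<le> W x y"
    and "x \<in> space M \<Longrightarrow> y \<in> space M \<Longrightarrow> W x y \<le> 1"
  using assms unfolding graphon_def by auto

lemma graphon_tensor:
  assumes "graphon M W"
  shows "graphon (M \<Otimes>\<^sub>M M) (tensor W)"
proof -
  have [measurable]: "(\<lambda>z. W (f z) (g z)) \<in> borel_measurable N"
    if "f \<in> measurable N M" "g \<in> measurable N M" for N f g
    using measurable_kernel_comp[OF graphon_measurable[OF assms] that] .
  have "case_prod (tensor W) = (\<lambda>Z. W (fst (fst Z)) (fst (snd Z)) * W (snd (fst Z)) (snd (snd Z)))"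
    by (auto simp: tensor_def fun_eq_iff)
  moreover have "(\<lambda>Z. W (fst (fst Z)) (fst (snd Z)) * W (snd (fst Z)) (snd (snd Z)))
      \<in> borel_measurable ((M \<Otimes>\<^sub>M M) \<Otimes>\<^sub>M (M \<Otimes>\<^sub>M M))"
    by measurable
  ultimately show ?thesis
    using assms by (auto simp: graphon_def tensor_def space_pair_measure mult_le_one)
qed

lemma graphon_row_integrable:
  assumes "finite_measure M" "graphon M W" "x \<in> space M"
  shows "integrable M (W x)"
proof -
  interpret finite_measure M by fact
  have "(\<lambda>y. W x y) \<in> borel_measurable M"
    using assms(3) by (intro measurable_kernel_comp[OF graphon_measurable[OF assms(2)]]) auto
  moreover have "AE y in M. norm (W x y) \<le> 1"
    using graphonD(3,4)[OF assms(2) assms(3)] by (intro AE_I2) simp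
  ultimately show ?thesis by (intro integrable_const_bound[where B = 1]) simp_all
qed

lemma regular_bounds:
  assumes "prob_space M" "graphon M W" "regular M p W"
  shows "0 \<le> p \<and> p \<le> 1"
proof -
  interpret prob_space M by fact
  have "\<exists>x\<in>space M. (\<integral>y. W x y \<partial>M) = p"
  proof (rule ccontr)
    assume none: "\<not> ?thesis"
    have "AE x in M. False"
      using AE_space assms(3)[unfolded regular_def] by eventually_elim (use none in auto)
    then show False by simp
  qed
  then obtain x where x: "x \<in> space M" "(\<integral>y. W x y \<partial>M) = p" by blast
  have "0 \<le> (\<integral>y. W x y \<partial>M)"
    using graphonD(3)[OF assms(2) x(1)] by (rule Bochner_Integration.integral_nonneg)
  moreover have "(\<integral>y. W x y \<partial>M) \<le> (\<integral>y. 1 \<partial>M)"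
    using graphonD(4)[OF assms(2) x(1)] graphon_row_integrable[OF finite_measure_axioms assms(2) x(1)]
    by (intro integral_mono) simp_all
  ultimately show ?thesis using x(2) by (simp add: prob_space)
qed

lemma bounded_kernel_graphon:
  assumes "prob_space M" "graphon M W" "0 \<le> p" "p \<le> 1"
  shows "bounded_kernel M (\<lambda>x y. W x y - p)"
  unfolding bounded_kernel_def bounded_kernel_axioms_def
proof (intro conjI allI impI assms(1))
  have "(\<lambda>z. W (fst z) (snd z)) \<in> borel_measurable (M \<Otimes>\<^sub>M M)"
    using graphon_measurable[OF assms(2)] by (simp add: split_beta')
  then show "(\<lambda>(x, y). W x y - p) \<in> borel_measurable (M \<Otimes>\<^sub>M M)"
    by (simp add: split_beta')
  show "\<bar>W x y - p\<bar> \<le> 1" if "x \<in> space M" "y \<in> space M" for x y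
    using graphonD(3,4)[OF assms(2) that] assms(3,4) by (simp add: abs_le_iff)
qed

lemma kernel_form_graphon_indicators:
  assumes M: "prob_space M" and W: "graphon M W" and A: "A \<in> sets M" and B: "B \<in> sets M"
  shows "kernel_form M (\<lambda>x y. W x y - p) (indicator A) (indicator B)
    = (\<integral>z. W (fst z) (snd z) * indicator A (fst z) * indicator B (snd z) \<partial>(M \<Otimes>\<^sub>M M))
      - p * (measure M A * measure M B)"
proof -
  interpret bounded_kernel M W
    using bounded_kernel_graphon[OF M W order_refl zero_le_one] by simp
  have "kernel_form M (\<lambda>x y. W x y - p) (indicator A) (indicator B)
      = (\<integral>z. W (fst z) (snd z) * indicator A (fst z) * indicator B (snd z)
            - p * (indicator A (fst z) * indicator B (snd z)) \<partial>(M \<Otimes>\<^sub>M M))"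
    unfolding kernel_form_def by (intro Bochner_Integration.integral_cong) (auto simp: algebra_simps)
  also have "\<dots> = (\<integral>z. W (fst z) (snd z) * indicator A (fst z) * indicator B (snd z) \<partial>(M \<Otimes>\<^sub>M M))
      - p * (measure M A * measure M B)"
    using integrable_kernel_integrand[of "indicator A" "indicator B"] A B
      integral_mult_fst_snd[OF M M, of "indicator A" "indicator B" 1 1]
    by simp
  finally show ?thesis .
qed

lemma locally_dense_iff_kernel_form:
  assumes "prob_space M" "graphon M W"
  shows "locally_dense M p W \<longleftrightarrow>
    (\<forall>U\<in>sets M. 0 \<le> kernel_form M (\<lambda>x y. W x y - p) (indicator U) (indicator U))"
proof -
  have "(LINT z:U \<times> U|M \<Otimes>\<^sub>M M. W (fst z) (snd z))
      = (\<integral>z. W (fst z) (snd z) * indicator U (fst z) * indicator U (snd z) \<partial>(M \<Otimes>\<^sub>M M))" for U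
    unfolding set_lebesgue_integral_def
    by (intro Bochner_Integration.integral_cong) (auto simp: indicator_times)
  then show ?thesis
    using kernel_form_graphon_indicators[OF assms]
    by (auto simp: locally_dense_def power2_eq_square)
qed

lemma (in prob_space) abs_integral_le_1:
  fixes f :: "'a \<Rightarrow> real"
  assumes "f \<in> borel_measurable M" "\<And>x. x \<in> space M \<Longrightarrow> \<bar>f x\<bar> \<le> 1"
  shows "\<bar>integral\<^sup>L M f\<bar> \<le> 1"
proof -
  have "integrable M f" using assms by (intro integrable_const_bound[where B = 1] AE_I2) auto
  then have "\<bar>integral\<^sup>L M f\<bar> \<le> (\<integral>x. 1 \<partial>M)"
    using assms by (intro order_trans[OF integral_abs_bound] integral_mono) auto
  then show ?thesis by (simp add: prob_space)
qed

lemma integral_tensor_mult: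
  fixes f :: "'a \<Rightarrow> 'a \<Rightarrow> real" and g :: "'b \<Rightarrow> 'b \<Rightarrow> real"
  assumes M: "prob_space M" and N: "prob_space N"
    and f: "case_prod f \<in> borel_measurable (M \<Otimes>\<^sub>M M)" "\<And>x y. x \<in> space M \<Longrightarrow> y \<in> space M \<Longrightarrow> \<bar>f x y\<bar> \<le> 1"
    and g: "case_prod g \<in> borel_measurable (N \<Otimes>\<^sub>M N)" "\<And>x y. x \<in> space N \<Longrightarrow> y \<in> space N \<Longrightarrow> \<bar>g x y\<bar> \<le> 1"
  shows integrable_tensor_mult: "integrable ((M \<Otimes>\<^sub>M N) \<Otimes>\<^sub>M (M \<Otimes>\<^sub>M N))
      (\<lambda>Z. f (fst (fst Z)) (fst (snd Z)) * g (snd (fst Z)) (snd (snd Z)))"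
    and "(\<integral>Z. f (fst (fst Z)) (fst (snd Z)) * g (snd (fst Z)) (snd (snd Z)) \<partial>((M \<Otimes>\<^sub>M N) \<Otimes>\<^sub>M (M \<Otimes>\<^sub>M N)))
    = (\<integral>z. f (fst z) (snd z) \<partial>(M \<Otimes>\<^sub>M M)) * (\<integral>z. g (fst z) (snd z) \<partial>(N \<Otimes>\<^sub>M N))"
proof -
  interpret M: prob_space M by fact
  interpret N: prob_space N by fact
  interpret MM: pair_prob_space M M ..
  interpret NN: pair_prob_space N N ..
  interpret MN: pair_prob_space "M \<Otimes>\<^sub>M N" "M \<Otimes>\<^sub>M N"
    by (simp add: pair_prob_space_def pair_sigma_finite_def prob_space_imp_sigma_finite
        prob_space_pair M N)
  have [measurable]: "(\<lambda>z. f (h z) (k z)) \<in> borel_measurable L"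
    if "h \<in> measurable L M" "k \<in> measurable L M" for L h k
    using measurable_kernel_comp[OF f(1) that] .
  have [measurable]: "(\<lambda>z. g (h z) (k z)) \<in> borel_measurable L"
    if "h \<in> measurable L N" "k \<in> measurable L N" for L h k
    using measurable_kernel_comp[OF g(1) that] .
  have f_row: "(\<lambda>y. f x y) \<in> borel_measurable M" "\<bar>\<integral>y. f x y \<partial>M\<bar> \<le> 1" if "x \<in> space M" for x
    using that f(2) by (auto intro!: M.abs_integral_le_1)
  have g_row: "(\<lambda>y. g x y) \<in> borel_measurable N" "\<bar>\<integral>y. g x y \<partial>N\<bar> \<le> 1" if "x \<in> space N" for x
    using that g(2) by (auto intro!: N.abs_integral_le_1)
  show int: "integrable ((M \<Otimes>\<^sub>M N) \<Otimes>\<^sub>M (M \<Otimes>\<^sub>M N))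
      (\<lambda>Z. f (fst (fst Z)) (fst (snd Z)) * g (snd (fst Z)) (snd (snd Z)))"
    using f(2) g(2)
    by (intro MN.P.integrable_const_bound[where B = 1] AE_I2)
       (auto simp: space_pair_measure abs_mult intro!: mult_le_one)
  have "(\<integral>Z. f (fst (fst Z)) (fst (snd Z)) * g (snd (fst Z)) (snd (snd Z)) \<partial>((M \<Otimes>\<^sub>M N) \<Otimes>\<^sub>M (M \<Otimes>\<^sub>M N)))
      = (\<integral>u. (\<integral>v. f (fst u) (fst v) * g (snd u) (snd v) \<partial>(M \<Otimes>\<^sub>M N)) \<partial>(M \<Otimes>\<^sub>M N))"
    using int by (simp add: MN.integral_fst'[symmetric])
  also have "\<dots> = (\<integral>u. (\<integral>y. f (fst u) y \<partial>M) * (\<integral>y. g (snd u) y \<partial>N) \<partial>(M \<Otimes>\<^sub>M N))"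
    using f(2) g(2)
    by (intro Bochner_Integration.integral_cong refl integral_mult_fst_snd(2)[OF M N])
       (auto simp: space_pair_measure intro: f_row g_row)
  also have "\<dots> = (\<integral>x. (\<integral>y. f x y \<partial>M) \<partial>M) * (\<integral>x. (\<integral>y. g x y \<partial>N) \<partial>N)"
    using f_row g_row by (intro integral_mult_fst_snd(2)[OF M N]) measurable
  also have "\<dots> = (\<integral>z. f (fst z) (snd z) \<partial>(M \<Otimes>\<^sub>M M)) * (\<integral>z. g (fst z) (snd z) \<partial>(N \<Otimes>\<^sub>M N))"
  proof -
    have fi: "integrable (M \<Otimes>\<^sub>M M) (\<lambda>z. f (fst z) (snd z))"
      and gi: "integrable (N \<Otimes>\<^sub>M N) (\<lambda>z. g (fst z) (snd z))"
      using f(2) g(2)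
      by (auto intro!: MM.P.integrable_const_bound[where B = 1] NN.P.integrable_const_bound[where B = 1]
          AE_I2 simp: space_pair_measure)
    show ?thesis using MM.integral_fst'[OF fi] NN.integral_fst'[OF gi] by simp
  qed
  finally show "(\<integral>Z. f (fst (fst Z)) (fst (snd Z)) * g (snd (fst Z)) (snd (snd Z)) \<partial>((M \<Otimes>\<^sub>M N) \<Otimes>\<^sub>M (M \<Otimes>\<^sub>M N)))
    = (\<integral>z. f (fst z) (snd z) \<partial>(M \<Otimes>\<^sub>M M)) * (\<integral>z. g (fst z) (snd z) \<partial>(N \<Otimes>\<^sub>M N))" .
qed

lemma regular_tensor:
  assumes M: "prob_space M" and W: "graphon M W" and reg: "regular M p W"
  shows "regular (M \<Otimes>\<^sub>M M) (p\<^sup>2) (tensor W)"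
proof -
  interpret prob_space M by fact
  interpret pair_prob_space M M ..
  have [measurable]: "case_prod W \<in> borel_measurable (M \<Otimes>\<^sub>M M)" by (rule graphon_measurable[OF W])
  have "AE u in M \<Otimes>\<^sub>M M. (\<integral>y. W (fst u) y \<partial>M) = p \<and> (\<integral>y. W (snd u) y \<partial>M) = p"
  proof (rule AE_pair_measure)
    show "{u \<in> space (M \<Otimes>\<^sub>M M). (\<integral>y. W (fst u) y \<partial>M) = p \<and> (\<integral>y. W (snd u) y \<partial>M) = p}
        \<in> sets (M \<Otimes>\<^sub>M M)"
      by measurable
    show "AE x in M. AE y in M. (\<integral>z. W (fst (x, y)) z \<partial>M) = p \<and> (\<integral>z. W (snd (x, y)) z \<partial>M) = p"
      using reg[unfolded regular_def]
    proof eventually_elim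
      case (elim x)
      show ?case using reg[unfolded regular_def] by eventually_elim (use elim in simp)
    qed
  qed
  with AE_space show ?thesis
    unfolding regular_def
  proof eventually_elim
    case (elim u)
    then have u: "fst u \<in> space M" "snd u \<in> space M" by (auto simp: space_pair_measure)
    have "(\<integral>v. tensor W u v \<partial>(M \<Otimes>\<^sub>M M)) = (\<integral>v. W (fst u) (fst v) * W (snd u) (snd v) \<partial>(M \<Otimes>\<^sub>M M))"
      by (simp add: tensor_def split_beta)
    also have "\<dots> = (\<integral>y. W (fst u) y \<partial>M) * (\<integral>y. W (snd u) y \<partial>M)"
      using graphonD(3,4)[OF W] u
      by (intro integral_mult_fst_snd(2)[OF M M, where Cf = 1 and Cg = 1])
         (auto intro: measurable_kernel_comp[OF graphon_measurable[OF W]])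
    finally show ?case using elim by (simp add: power2_eq_square)
  qed
qed

locale regular_locally_dense_graphon = prob_space M for M :: "'a measure" +
  fixes W :: "'a \<Rightarrow> 'a \<Rightarrow> real" and p :: real
  assumes graphon: "graphon M W" and regular: "regular M p W"
    and locally_dense: "locally_dense M p W" and fine_partitions: "has_fine_partitions M"
begin

lemma p_nonneg: "0 \<le> p" and p_le_1: "p \<le> 1"
  using regular_bounds[OF prob_space_axioms graphon regular] by auto

sublocale G: dense_centred_kernel M "\<lambda>x y. W x y - p"
  unfolding dense_centred_kernel_def dense_centred_kernel_axioms_def
proof (intro conjI allI impI ballI)
  show "bounded_kernel M (\<lambda>x y. W x y - p)"
    by (rule bounded_kernel_graphon[OF prob_space_axioms graphon p_nonneg p_le_1])
  show "W x y - p = W y x - p" if "x \<in> space M" "y \<in> space M" for x y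
    using graphonD(2)[OF graphon that] by simp
  show "AE x in M. (\<integral>y. W x y - p \<partial>M) = 0"
    using AE_space regular[unfolded regular_def]
    by eventually_elim (simp add: graphon_row_integrable[OF finite_measure_axioms graphon] prob_space)
  show "0 \<le> kernel_form M (\<lambda>x y. W x y - p) (indicator U) (indicator U)" if "U \<in> sets M" for U
    using locally_dense that locally_dense_iff_kernel_form[OF prob_space_axioms graphon] by blast
qed (rule fine_partitions)

sublocale T: bounded_kernel "M \<Otimes>\<^sub>M M" "\<lambda>u v. tensor W u v - p\<^sup>2"
  using p_nonneg p_le_1
  by (intro bounded_kernel_graphon prob_space_pair prob_space_axioms graphon_tensor graphon)
     (auto simp: power_le_one)

lemma tensor_form_rectangles:
  assumes A: "A \<in> sets M" "A' \<in> sets M" and E: "E \<in> sets M" "E' \<in> sets M"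
  shows "T.form (indicator (A \<times> E)) (indicator (A' \<times> E'))
    = (G.form (indicator A) (indicator A') + p * (measure M A * measure M A'))
      * (G.form (indicator E) (indicator E') + p * (measure M E * measure M E'))
      - p\<^sup>2 * ((measure M A * measure M A') * (measure M E * measure M E'))" (is "_ = ?rhs")
proof -
  define w where "w = (\<lambda>B B' x y. W x y * indicator B x * indicator B' y :: real)"
  define r :: "'a set \<Rightarrow> 'a set \<Rightarrow> 'a \<Rightarrow> 'a \<Rightarrow> real"
    where "r = (\<lambda>B B' x y. indicator B x * indicator B' y)"
  have [measurable]: "case_prod W \<in> borel_measurable (M \<Otimes>\<^sub>M M)" by (rule graphon_measurable[OF graphon])
  have w: "case_prod (w B B') \<in> borel_measurable (M \<Otimes>\<^sub>M M)"
    "x \<in> space M \<Longrightarrow> y \<in> space M \<Longrightarrow> \<bar>w B B' x y\<bar> \<le> 1"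
    if "B \<in> sets M" "B' \<in> sets M" for B B' x y
    using that graphonD(3,4)[OF graphon, of x y] by (auto simp: w_def split_beta' indicator_def)
  have r: "case_prod (r B B') \<in> borel_measurable (M \<Otimes>\<^sub>M M)" "\<bar>r B B' x y\<bar> \<le> 1"
    if "B \<in> sets M" "B' \<in> sets M" for B B' x y
    using that by (auto simp: r_def split_beta' indicator_def)
  have r_integral: "(\<integral>z. r B B' (fst z) (snd z) \<partial>(M \<Otimes>\<^sub>M M)) = measure M B * measure M B'"
    if "B \<in> sets M" "B' \<in> sets M" for B B'
    using that integral_mult_fst_snd(2)[OF prob_space_axioms prob_space_axioms, of "indicator B" "indicator B'" 1 1]
    by (simp add: r_def)
  have w_integral: "(\<integral>z. w B B' (fst z) (snd z) \<partial>(M \<Otimes>\<^sub>M M))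
      = G.form (indicator B) (indicator B') + p * (measure M B * measure M B')"
    if "B \<in> sets M" "B' \<in> sets M" for B B'
    using kernel_form_graphon_indicators[OF prob_space_axioms graphon that] by (simp add: w_def)
  note product = integral_tensor_mult[OF prob_space_axioms prob_space_axioms]
    integrable_tensor_mult[OF prob_space_axioms prob_space_axioms]
  have "T.form (indicator (A \<times> E)) (indicator (A' \<times> E'))
      = (\<integral>Z. w A A' (fst (fst Z)) (fst (snd Z)) * w E E' (snd (fst Z)) (snd (snd Z))
            - p\<^sup>2 * (r A A' (fst (fst Z)) (fst (snd Z)) * r E E' (snd (fst Z)) (snd (snd Z)))
          \<partial>((M \<Otimes>\<^sub>M M) \<Otimes>\<^sub>M (M \<Otimes>\<^sub>M M)))"
    unfolding kernel_form_def
    by (intro Bochner_Integration.integral_cong)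
       (auto simp: w_def r_def tensor_def split_beta' indicator_def)
  also have "\<dots> = (\<integral>z. w A A' (fst z) (snd z) \<partial>(M \<Otimes>\<^sub>M M)) * (\<integral>z. w E E' (fst z) (snd z) \<partial>(M \<Otimes>\<^sub>M M))
      - p\<^sup>2 * ((\<integral>z. r A A' (fst z) (snd z) \<partial>(M \<Otimes>\<^sub>M M)) * (\<integral>z. r E E' (fst z) (snd z) \<partial>(M \<Otimes>\<^sub>M M)))"
    using w[OF A] w[OF E] r[OF A] r[OF E] by (simp add: product)
  also have "\<dots> = ?rhs" using A E by (simp only: r_integral w_integral)
  finally show ?thesis .
qed

lemma tensor_form_rectangle_lincomb_nonneg:
  assumes "indicator_lincomb {A \<times> E | A E. A \<in> sets M \<and> E \<in> sets M} F"
  shows "0 \<le> T.form F F"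
proof -
  obtain n :: nat and c A E where AE: "\<forall>k. A k \<in> sets M \<and> E k \<in> sets M"
    and F: "F = (\<lambda>z. \<Sum>k<n. c k * indicator (A k \<times> E k) z)"
    using indicator_lincomb_rectangles_explicit[OF assms] by blast
  have A: "A k \<in> sets M" and E: "E k \<in> sets M" for k using AE by auto
  define X where "X = (\<lambda>k l. G.form (indicator (A k)) (indicator (A l)))"
  define Y where "Y = (\<lambda>k l. G.form (indicator (E k)) (indicator (E l)))"
  define a where "a = (\<lambda>k. measure M (A k))"
  define b where "b = (\<lambda>k. measure M (E k))"
  have psd: "pos_semidef n X" "pos_semidef n Y"
    unfolding X_def Y_def using A E by (intro G.pos_semidef_gram; simp)+
  have sym: "X k l = X l k" "Y k l = Y l k" for k l
    unfolding X_def Y_def using A E by (intro G.form_swap[OF G.kernel_symmetric]; simp)+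
  have entry: "T.form (indicator (A k \<times> E k)) (indicator (A l \<times> E l))
      = (X k l + p * (a k * a l)) * (Y k l + p * (b k * b l)) - p\<^sup>2 * ((a k * a l) * (b k * b l))" for k l
    using tensor_form_rectangles[OF A[of k] A[of l] E[of k] E[of l]] by (simp add: X_def Y_def a_def b_def)
  have "T.form F F = (\<Sum>k<n. \<Sum>l<n. c k * c l * T.form (indicator (A k \<times> E k)) (indicator (A l \<times> E l)))"
    unfolding F by (intro T.form_lincomb_indicators pair_measureI A E)
  also have "\<dots> = (\<Sum>k<n. \<Sum>l<n. c k * c l * (X k l * Y k l)
      + p * ((c k * b k) * (c l * b l) * X k l) + p * ((c k * a k) * (c l * a l) * Y k l))"
    by (intro sum.cong refl) (simp only: entry; simp add: algebra_simps power2_eq_square)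
  also have "\<dots> = (\<Sum>k<n. \<Sum>l<n. c k * c l * (X k l * Y k l))
      + p * (\<Sum>k<n. \<Sum>l<n. (c k * b k) * (c l * b l) * X k l)
      + p * (\<Sum>k<n. \<Sum>l<n. (c k * a k) * (c l * a l) * Y k l)"
    by (simp only: sum.distrib sum_distrib_left)
  also have "0 \<le> \<dots>"
    using pos_semidef_hadamard[OF sym psd] psd p_nonneg unfolding pos_semidef_def by simp
  finally show ?thesis .
qed

lemma tensor_locally_dense: "locally_dense (M \<Otimes>\<^sub>M M) (p\<^sup>2) (tensor W)"
proof -
  let ?R = "{A \<times> E | A E. A \<in> sets M \<and> E \<in> sets M}"
  have generated: "sets (M \<Otimes>\<^sub>M M) = sigma_sets (space (M \<Otimes>\<^sub>M M)) ?R"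
    by (simp add: sets_pair_measure space_pair_measure)
  have "?R \<subseteq> Pow (space (M \<Otimes>\<^sub>M M))"
    using sets.sets_into_space by (auto simp: space_pair_measure)
  moreover have "space (M \<Otimes>\<^sub>M M) \<in> ?R" by (auto simp: space_pair_measure)
  ultimately have "0 \<le> T.form (indicator V) (indicator V)" if "V \<in> sets (M \<Otimes>\<^sub>M M)" for V
    using generated Int_stable_pair_measure_generator tensor_form_rectangle_lincomb_nonneg that
    by (intro T.form_indicator_nonneg_by_density)
  then show ?thesis
    using locally_dense_iff_kernel_form[OF prob_space_pair[OF prob_space_axioms prob_space_axioms]
        graphon_tensor[OF graphon]] by blast
qed

end

theorem lemma4p9:
  fixes M :: "('a::polish_space) measure" and W :: "'a \<Rightarrow> 'a \<Rightarrow> real" and p :: real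
  assumes "atomless_standard_prob_space M"
    and "graphon M W" and "regular M p W" and "locally_dense M p W"
  shows "graphon (M \<Otimes>\<^sub>M M) (tensor W) \<and> regular (M \<Otimes>\<^sub>M M) (p\<^sup>2) (tensor W)
         \<and> locally_dense (M \<Otimes>\<^sub>M M) (p\<^sup>2) (tensor W)"
proof -
  have M: "prob_space M" and borel: "sets M = sets borel" and "atomless M"
    using assms(1) unfolding atomless_standard_prob_space_def by auto
  then interpret prob_space M by simp
  have "has_fine_partitions M"
    using finite_measure_axioms borel atomless_measure_singleton[OF \<open>atomless M\<close>]
    by (intro has_fine_partitions_borel) (simp_all add: borel)
  then interpret regular_locally_dense_graphon M W p
    using assms(2-4) by unfold_locales
  show ?thesis using graphon_tensor[OF assms(2)] regular_tensor[OF M assms(2,3)] tensor_locally_dense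
    by blast
qed

end
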